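(* Let $I\subseteq\mathbb{R}$ be an interval, let $f:I\to\mathbb{R}$ be differentiable on the interior $I^{\circ}$, let $a,b\in I^{\circ}$ with $a<b$, assume $f'\in L[a,b]$, and let $\alpha,\lambda\in[0,1]$. Suppose that $|f'|^{q}$ is $s$-concave on $[a,b]$ for some fixed $s\in(0,1]$ and some $q>1$, and let $p$ satisfy $\frac1p+\frac1q=1$. Define $$I_f(\lambda,\alpha,a,b)=\lambda\big(\alpha f(a)+(1-\alpha)f(b)\big)+(1-\lambda)f(\alpha a+(1-\alpha)b)-\frac{1}{b-a}\int_a^b f(x)\,dx,$$ $$E_f(\alpha,q)=(1-\alpha)\left|f'\!\left(\tfrac{(1-\alpha)b+(1+\alpha)a}{2}\right)\right|^q,\qquad F_f(\alpha,q)=\alpha\left|f'\!\left(\tfrac{(2-\alpha)b+\alpha a}{2}\right)\right|^q,$$ $$\varepsilon_1(\alpha,\lambda,p)=(\alpha\lambda)^{p+1}+(1-\alpha-\alpha\lambda)^{p+1},\qquad \varepsilon_2(\alpha,\lambda,p)=(\alpha\lambda)^{p+1}-(\alpha\lambda-1+\alpha)^{p+1}.$$ Then $|I_f(\lambda,\alpha,a,b)|\leq (b-a)\,2^{\frac{s-1}{q}}\left(\frac{1}{p+1}\right)^{1/p}\cdot K$, where $K=\varepsilon_1^{1/p}(\alpha,\lambda,p)E_f^{1/q}(\alpha,q)+\varepsilon_1^{1/p}(1-\alpha,\lambda,p)F_f^{1/q}(\alpha,q)$ if $\alpha\lambda\leq 1-\alpha\leq 1-\lambda(1-\alpha)$;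 $K=\varepsilon_1^{1/p}(\alpha,\lambda,p)E_f^{1/q}(\alpha,q)+\varepsilon_2^{1/p}(1-\alpha,\lambda,p)F_f^{1/q}(\alpha,q)$ if $\alpha\lambda\leq 1-\lambda(1-\alpha)\leq 1-\alpha$; $K=\varepsilon_2^{1/p}(\alpha,\lambda,p)E_f^{1/q}(\alpha,q)+\varepsilon_1^{1/p}(1-\alpha,\lambda,p)F_f^{1/q}(\alpha,q)$ if $1-\alpha\leq\alpha\lambda\leq 1-\lambda(1-\alpha)$.
   Context: For a fixed $s\in(0,1]$, a function $g:[a,b]\to[0,\infty)$ is called $s$-concave (in the second sense) on $[a,b]$ if $g(\theta x+(1-\theta)y)\geq \theta^{s}g(x)+(1-\theta)^{s}g(y)$ for all $x,y\in[a,b]$ and all $\theta\in[0,1]$. *)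

theory Defs
  imports "HOL-Analysis.Analysis"
begin

definition s_concave_on :: "real \<Rightarrow> real set \<Rightarrow> (real \<Rightarrow> real) \<Rightarrow> bool" where
  "s_concave_on s A g \<longleftrightarrow> (\<forall>x\<in>A. g x \<ge> 0) \<and>
     (\<forall>x\<in>A. \<forall>y\<in>A. \<forall>\<theta>\<in>{0..1}.
        g (\<theta> * x + (1 - \<theta>) * y) \<ge> \<theta> powr s * g x + (1 - \<theta>) powr s * g y)"

definition I_f :: "(real \<Rightarrow> real) \<Rightarrow> real \<Rightarrow> real \<Rightarrow> real \<Rightarrow> real \<Rightarrow> real" where
  "I_f f lam \<alpha> a b = lam * (\<alpha> * f a + (1 - \<alpha>) * f b) + (1 - lam) * f (\<alpha> * a + (1 - \<alpha>) * b)
      - (1 / (b - a)) * integral {a..b} f"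

definition E_f :: "(real \<Rightarrow> real) \<Rightarrow> real \<Rightarrow> real \<Rightarrow> real \<Rightarrow> real \<Rightarrow> real" where
  "E_f f' a b \<alpha> q = (1 - \<alpha>) * \<bar>f' (((1 - \<alpha>) * b + (1 + \<alpha>) * a) / 2)\<bar> powr q"

definition F_f :: "(real \<Rightarrow> real) \<Rightarrow> real \<Rightarrow> real \<Rightarrow> real \<Rightarrow> real \<Rightarrow> real" where
  "F_f f' a b \<alpha> q = \<alpha> * \<bar>f' (((2 - \<alpha>) * b + \<alpha> * a) / 2)\<bar> powr q"

definition eps1 :: "real \<Rightarrow> real \<Rightarrow> real \<Rightarrow> real" where
  "eps1 \<alpha> lam p = (\<alpha> * lam) powr (p + 1) + (1 - \<alpha> - \<alpha> * lam) powr (p + 1)"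

definition eps2 :: "real \<Rightarrow> real \<Rightarrow> real \<Rightarrow> real" where
  "eps2 \<alpha> lam p = (\<alpha> * lam) powr (p + 1) - (\<alpha> * lam - 1 + \<alpha>) powr (p + 1)"

end

theory Submission
  imports Defs
begin

text \<open>
  Put \<open>m = \<alpha>a + (1-\<alpha>)b\<close> and the kernel nodes \<open>k\<^sub>1 = a + \<alpha>\<lambda>(b-a)\<close>,
  \<open>k\<^sub>2 = a + (1-\<lambda>(1-\<alpha>))(b-a)\<close>. Integrating \<open>(x-k\<^sub>1) f'(x)\<close> by parts over \<open>[a,m]\<close> and
  \<open>(x-k\<^sub>2) f'(x)\<close> over \<open>[m,b]\<close> writes \<open>(b-a) I\<^sub>f\<close> as the sum of the two integrals.
  Each is bounded by Holder's inequality: the factor \<open>\<integral>|x-k|\<^sup>p\<close> is computed explicitly and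
  gives \<open>\<epsilon>\<^sub>1\<close> or \<open>\<epsilon>\<^sub>2\<close> according as the node lies inside or beyond its subinterval, while
  \<open>\<integral>|f'|\<^sup>q\<close> is controlled by the Hermite--Hadamard inequality for \<open>s\<close>-concave functions,
  \<open>\<integral>\<^sub>x\<^sup>y g \<le> (y-x) 2\<^bsup>s-1\<^esup> g((x+y)/2)\<close>, whose midpoints are those appearing in \<open>E\<^sub>f\<close> and \<open>F\<^sub>f\<close>.
\<close>

lemma has_integral_abs_diff_powr_right:
  fixes k x0 x1 p :: real
  assumes "k \<le> x0" "x0 \<le> x1" "p > -1"
  shows "((\<lambda>x. \<bar>x - k\<bar> powr p) has_integral
          ((x1 - k) powr (p + 1) - (x0 - k) powr (p + 1)) / (p + 1)) {x0..x1}"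
proof -
  have "((\<lambda>x. (x - k) powr p) has_integral
          (x1 - k) powr (p + 1) / (p + 1) - (x0 - k) powr (p + 1) / (p + 1)) {x0..x1}"
  proof (rule fundamental_theorem_of_calculus_interior)
    show "continuous_on {x0..x1} (\<lambda>x. (x - k) powr (p + 1) / (p + 1))"
      using assms by (auto intro!: continuous_intros continuous_on_powr')
    fix x assume "x \<in> {x0<..<x1}"
    then have "x - k > 0" using assms by auto
    then have "((\<lambda>x. (x - k) powr (p + 1) / (p + 1)) has_real_derivative (x - k) powr p) (at x)"
      using assms by (auto intro!: derivative_eq_intros)
    then show "((\<lambda>x. (x - k) powr (p + 1) / (p + 1)) has_vector_derivative (x - k) powr p) (at x)"
      by (simp add: has_real_derivative_iff_has_vector_derivative)
  qed (use assms in auto)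
  then have "((\<lambda>x. \<bar>x - k\<bar> powr p) has_integral
          (x1 - k) powr (p + 1) / (p + 1) - (x0 - k) powr (p + 1) / (p + 1)) {x0..x1}"
    by (rule has_integral_eq[rotated]) (use assms in auto)
  then show ?thesis by (simp add: diff_divide_distrib)
qed

lemma has_integral_abs_diff_powr_left:
  fixes k x0 x1 p :: real
  assumes "x0 \<le> x1" "x1 \<le> k" "p > -1"
  shows "((\<lambda>x. \<bar>x - k\<bar> powr p) has_integral
          ((k - x0) powr (p + 1) - (k - x1) powr (p + 1)) / (p + 1)) {x0..x1}"
proof -
  have "((\<lambda>x. \<bar>x - - k\<bar> powr p) has_integral
          ((- x0 - - k) powr (p + 1) - (- x1 - - k) powr (p + 1)) / (p + 1)) {- x1..- x0}"
    using assms by (intro has_integral_abs_diff_powr_right) auto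
  then have "((\<lambda>x. \<bar>- x - k\<bar> powr p) has_integral
          ((k - x0) powr (p + 1) - (k - x1) powr (p + 1)) / (p + 1)) {- x1..- x0}"
    by (simp add: abs_minus_commute add.commute)
  then show ?thesis
    using has_integral_reflect_real[where f="\<lambda>x. \<bar>x - k\<bar> powr p" and a=x0 and b=x1] by simp
qed

lemma has_integral_abs_diff_powr_mid:
  fixes k x0 x1 p :: real
  assumes "x0 \<le> k" "k \<le> x1" "p > -1"
  shows "((\<lambda>x. \<bar>x - k\<bar> powr p) has_integral
          ((k - x0) powr (p + 1) + (x1 - k) powr (p + 1)) / (p + 1)) {x0..x1}"
proof -
  have "((\<lambda>x. \<bar>x - k\<bar> powr p) has_integral
          ((k - x0) powr (p + 1) - 0) / (p + 1) + ((x1 - k) powr (p + 1) - 0) / (p + 1)) {x0..x1}"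
    using has_integral_combine[OF assms(1,2)
        has_integral_abs_diff_powr_left[of x0 k k p] has_integral_abs_diff_powr_right[of k k x1 p]]
      assms by simp
  then show ?thesis by (simp add: add_divide_distrib)
qed

lemma integral_left_kernel_eps1:
  fixes a b \<alpha> lam p :: real
  assumes "a \<le> b" "0 \<le> \<alpha>" "0 \<le> lam" "\<alpha> * lam \<le> 1 - \<alpha>" "p > -1"
  shows "integral {a..\<alpha> * a + (1 - \<alpha>) * b} (\<lambda>x. \<bar>x - (a + \<alpha> * lam * (b - a))\<bar> powr p)
       = (b - a) powr (p + 1) * eps1 \<alpha> lam p / (p + 1)"
proof -
  define k where "k = a + \<alpha> * lam * (b - a)"
  have dist: "k - a = (\<alpha> * lam) * (b - a)" "\<alpha> * a + (1 - \<alpha>) * b - k = (1 - \<alpha> - \<alpha> * lam) * (b - a)"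
    unfolding k_def by (simp_all add: algebra_simps)
  have nonneg: "\<alpha> * lam \<ge> 0" "1 - \<alpha> - \<alpha> * lam \<ge> 0" "b - a \<ge> 0"
    using assms by simp_all
  then have "a \<le> k" "k \<le> \<alpha> * a + (1 - \<alpha>) * b"
    using dist by (metis diff_ge_0_iff_ge mult_nonneg_nonneg)+
  then have "integral {a..\<alpha> * a + (1 - \<alpha>) * b} (\<lambda>x. \<bar>x - k\<bar> powr p)
      = ((k - a) powr (p + 1) + (\<alpha> * a + (1 - \<alpha>) * b - k) powr (p + 1)) / (p + 1)"
    using assms by (intro integral_unique has_integral_abs_diff_powr_mid)
  also have "\<dots> = ((\<alpha> * lam) powr (p + 1) * (b - a) powr (p + 1)
      + (1 - \<alpha> - \<alpha> * lam) powr (p + 1) * (b - a) powr (p + 1)) / (p + 1)"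
    unfolding dist by (simp only: powr_mult nonneg)
  also have "\<dots> = (b - a) powr (p + 1) * eps1 \<alpha> lam p / (p + 1)"
    unfolding eps1_def by (simp add: algebra_simps)
  finally show ?thesis unfolding k_def .
qed

lemma integral_left_kernel_eps2:
  fixes a b \<alpha> lam p :: real
  assumes "a \<le> b" "\<alpha> \<le> 1" "1 - \<alpha> \<le> \<alpha> * lam" "p > -1"
  shows "integral {a..\<alpha> * a + (1 - \<alpha>) * b} (\<lambda>x. \<bar>x - (a + \<alpha> * lam * (b - a))\<bar> powr p)
       = (b - a) powr (p + 1) * eps2 \<alpha> lam p / (p + 1)"
proof -
  define k where "k = a + \<alpha> * lam * (b - a)"
  have dist: "k - a = (\<alpha> * lam) * (b - a)" "k - (\<alpha> * a + (1 - \<alpha>) * b) = (\<alpha> * lam - 1 + \<alpha>) * (b - a)"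
    unfolding k_def by (simp_all add: algebra_simps)
  have nonneg: "\<alpha> * lam \<ge> 0" "\<alpha> * lam - 1 + \<alpha> \<ge> 0" "b - a \<ge> 0"
    using assms by simp_all
  have "\<alpha> * a + (1 - \<alpha>) * b - a = (1 - \<alpha>) * (b - a)" by (simp add: algebra_simps)
  then have "a \<le> \<alpha> * a + (1 - \<alpha>) * b" "\<alpha> * a + (1 - \<alpha>) * b \<le> k"
    using dist nonneg assms(2) by (metis diff_ge_0_iff_ge mult_nonneg_nonneg)+
  then have "integral {a..\<alpha> * a + (1 - \<alpha>) * b} (\<lambda>x. \<bar>x - k\<bar> powr p)
      = ((k - a) powr (p + 1) - (k - (\<alpha> * a + (1 - \<alpha>) * b)) powr (p + 1)) / (p + 1)"
    using assms by (intro integral_unique has_integral_abs_diff_powr_left)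
  also have "\<dots> = ((\<alpha> * lam) powr (p + 1) * (b - a) powr (p + 1)
      - (\<alpha> * lam - 1 + \<alpha>) powr (p + 1) * (b - a) powr (p + 1)) / (p + 1)"
    unfolding dist by (simp only: powr_mult nonneg)
  also have "\<dots> = (b - a) powr (p + 1) * eps2 \<alpha> lam p / (p + 1)"
    unfolding eps2_def by (simp add: algebra_simps)
  finally show ?thesis unfolding k_def .
qed

lemma integral_right_kernel_eps1:
  fixes a b \<alpha> lam p :: real
  assumes "a \<le> b" "\<alpha> \<le> 1" "0 \<le> lam" "1 - \<alpha> \<le> 1 - lam * (1 - \<alpha>)" "p > -1"
  shows "integral {\<alpha> * a + (1 - \<alpha>) * b..b} (\<lambda>x. \<bar>x - (a + (1 - lam * (1 - \<alpha>)) * (b - a))\<bar> powr p)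
       = (b - a) powr (p + 1) * eps1 (1 - \<alpha>) lam p / (p + 1)"
proof -
  define k where "k = a + (1 - lam * (1 - \<alpha>)) * (b - a)"
  have dist: "b - k = ((1 - \<alpha>) * lam) * (b - a)"
    "k - (\<alpha> * a + (1 - \<alpha>) * b) = (1 - (1 - \<alpha>) - (1 - \<alpha>) * lam) * (b - a)"
    unfolding k_def by (simp_all add: algebra_simps)
  have nonneg: "(1 - \<alpha>) * lam \<ge> 0" "1 - (1 - \<alpha>) - (1 - \<alpha>) * lam \<ge> 0" "b - a \<ge> 0"
    using assms by (simp_all add: mult.commute)
  then have "\<alpha> * a + (1 - \<alpha>) * b \<le> k" "k \<le> b"
    using dist by (metis diff_ge_0_iff_ge mult_nonneg_nonneg)+
  then have "integral {\<alpha> * a + (1 - \<alpha>) * b..b} (\<lambda>x. \<bar>x - k\<bar> powr p)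
      = ((k - (\<alpha> * a + (1 - \<alpha>) * b)) powr (p + 1) + (b - k) powr (p + 1)) / (p + 1)"
    using assms by (intro integral_unique has_integral_abs_diff_powr_mid)
  also have "\<dots> = ((1 - (1 - \<alpha>) - (1 - \<alpha>) * lam) powr (p + 1) * (b - a) powr (p + 1)
      + ((1 - \<alpha>) * lam) powr (p + 1) * (b - a) powr (p + 1)) / (p + 1)"
    unfolding dist by (simp only: powr_mult nonneg)
  also have "\<dots> = (b - a) powr (p + 1) * eps1 (1 - \<alpha>) lam p / (p + 1)"
    unfolding eps1_def by (simp add: algebra_simps)
  finally show ?thesis unfolding k_def .
qed

lemma integral_right_kernel_eps2:
  fixes a b \<alpha> lam p :: real
  assumes "a \<le> b" "0 \<le> \<alpha>" "\<alpha> \<le> 1" "0 \<le> lam" "1 - lam * (1 - \<alpha>) \<le> 1 - \<alpha>" "p > -1"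
  shows "integral {\<alpha> * a + (1 - \<alpha>) * b..b} (\<lambda>x. \<bar>x - (a + (1 - lam * (1 - \<alpha>)) * (b - a))\<bar> powr p)
       = (b - a) powr (p + 1) * eps2 (1 - \<alpha>) lam p / (p + 1)"
proof -
  define k where "k = a + (1 - lam * (1 - \<alpha>)) * (b - a)"
  have dist: "b - k = ((1 - \<alpha>) * lam) * (b - a)"
    "\<alpha> * a + (1 - \<alpha>) * b - k = ((1 - \<alpha>) * lam - 1 + (1 - \<alpha>)) * (b - a)"
    unfolding k_def by (simp_all add: algebra_simps)
  have nonneg: "(1 - \<alpha>) * lam \<ge> 0" "(1 - \<alpha>) * lam - 1 + (1 - \<alpha>) \<ge> 0" "b - a \<ge> 0"
    using assms by (simp_all add: mult.commute)
  have "b - (\<alpha> * a + (1 - \<alpha>) * b) = \<alpha> * (b - a)" by (simp add: algebra_simps)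
  then have "k \<le> \<alpha> * a + (1 - \<alpha>) * b" "\<alpha> * a + (1 - \<alpha>) * b \<le> b"
    using dist nonneg assms(2) by (metis diff_ge_0_iff_ge mult_nonneg_nonneg)+
  then have "integral {\<alpha> * a + (1 - \<alpha>) * b..b} (\<lambda>x. \<bar>x - k\<bar> powr p)
      = ((b - k) powr (p + 1) - (\<alpha> * a + (1 - \<alpha>) * b - k) powr (p + 1)) / (p + 1)"
    using assms by (intro integral_unique has_integral_abs_diff_powr_right)
  also have "\<dots> = (((1 - \<alpha>) * lam) powr (p + 1) * (b - a) powr (p + 1)
      - ((1 - \<alpha>) * lam - 1 + (1 - \<alpha>)) powr (p + 1) * (b - a) powr (p + 1)) / (p + 1)"
    unfolding dist by (simp only: powr_mult nonneg)
  also have "\<dots> = (b - a) powr (p + 1) * eps2 (1 - \<alpha>) lam p / (p + 1)"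
    unfolding eps2_def by (simp add: algebra_simps)
  finally show ?thesis unfolding k_def .
qed

lemma integral_mult_le_Holder:
  fixes u v :: "'a::euclidean_space \<Rightarrow> real"
  assumes pq: "p > 1" "q > 1" "1/p + 1/q = 1"
    and nonneg: "\<And>x. x \<in> S \<Longrightarrow> u x \<ge> 0" "\<And>x. x \<in> S \<Longrightarrow> v x \<ge> 0"
    and int: "(\<lambda>x. u x * v x) integrable_on S"
      "(\<lambda>x. u x powr p) integrable_on S" "(\<lambda>x. v x powr q) integrable_on S"
  shows "integral S (\<lambda>x. u x * v x)
     \<le> integral S (\<lambda>x. u x powr p) powr (1/p) * integral S (\<lambda>x. v x powr q) powr (1/q)"
proof -
  define A where "A = integral S (\<lambda>x. u x powr p)"
  define B where "B = integral S (\<lambda>x. v x powr q)"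
  have A0: "A \<ge> 0" unfolding A_def by (rule integral_nonneg[OF int(2)]) simp
  have B0: "B \<ge> 0" unfolding B_def by (rule integral_nonneg[OF int(3)]) simp
  have hA: "((\<lambda>x. u x powr p) has_integral A) S" and hB: "((\<lambda>x. v x powr q) has_integral B) S"
    using int unfolding A_def B_def by (simp_all add: integrable_integral)
  \<comment> \<open>Normalising by \<open>A + \<epsilon>\<close>, \<open>B + \<epsilon>\<close> instead of \<open>A\<close>, \<open>B\<close> avoids the degenerate cases \<open>A = 0\<close>, \<open>B = 0\<close>.\<close>
  have approx: "integral S (\<lambda>x. u x * v x) \<le> (A + \<epsilon>) powr (1/p) * (B + \<epsilon>) powr (1/q)"
    if "\<epsilon> > 0" for \<epsilon>
  proof -
    define c d where "c = (A + \<epsilon>) powr (1/p)" and "d = (B + \<epsilon>) powr (1/q)"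
    have cd: "c > 0" "d > 0" "c powr p = A + \<epsilon>" "d powr q = B + \<epsilon>"
      using A0 B0 pq \<open>\<epsilon> > 0\<close> by (simp_all add: c_def d_def powr_powr)
    have young: "u x * v x \<le> c * d * (u x powr p / (p * (A + \<epsilon>)) + v x powr q / (q * (B + \<epsilon>)))"
      if "x \<in> S" for x
    proof -
      have "u x * v x = c * d * ((u x / c) * (v x / d))" using cd by simp
      also have "\<dots> \<le> c * d * ((u x / c) powr p / p + (v x / d) powr q / q)"
        using Youngs_inequality[OF pq, of "u x / c" "v x / d"] nonneg[OF that] cd
        by (intro mult_left_mono) auto
      finally show ?thesis
        using nonneg[OF that] cd by (simp add: powr_divide mult.commute)
    qed
    have "integral S (\<lambda>x. u x * v x) \<le> c * d * (A / (p * (A + \<epsilon>)) + B / (q * (B + \<epsilon>)))"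
      by (intro has_integral_le[OF integrable_integral[OF int(1)] _ young]
          has_integral_mult_right has_integral_add has_integral_divide hA hB)
    also have "\<dots> \<le> c * d * (1/p + 1/q)"
      using A0 B0 pq cd \<open>\<epsilon> > 0\<close>
      by (intro mult_left_mono add_mono) (auto simp: divide_simps)
    finally show ?thesis using pq by (simp add: c_def d_def)
  qed
  have "((\<lambda>\<epsilon>. (A + \<epsilon>) powr (1/p) * (B + \<epsilon>) powr (1/q)) \<longlongrightarrow> A powr (1/p) * B powr (1/q))
      (at_right 0)"
    using A0 B0 pq
    by (auto intro!: tendsto_eq_intros exI[of _ 1] simp: eventually_at_right_field)
  then show ?thesis
    unfolding A_def[symmetric] B_def[symmetric]
    by (rule tendsto_lowerbound) (auto simp: eventually_at_right_field intro!: exI[of _ 1] approx)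
qed

lemma abs_integral_mult_le_Holder:
  fixes u v :: "'a::euclidean_space \<Rightarrow> real"
  assumes pq: "p > 1" "q > 1" "1/p + 1/q = 1"
    and int: "(\<lambda>x. u x * v x) integrable_on S"
      "(\<lambda>x. \<bar>u x\<bar> powr p) integrable_on S" "(\<lambda>x. \<bar>v x\<bar> powr q) integrable_on S"
  shows "\<bar>integral S (\<lambda>x. u x * v x)\<bar>
     \<le> integral S (\<lambda>x. \<bar>u x\<bar> powr p) powr (1/p) * integral S (\<lambda>x. \<bar>v x\<bar> powr q) powr (1/q)"
proof -
  have "(\<lambda>x. u x * v x) absolutely_integrable_on S"
  proof (rule absolutely_integrable_integrable_bound[OF _ int(1)])
    show "(\<lambda>x. \<bar>u x\<bar> powr p / p + \<bar>v x\<bar> powr q / q) integrable_on S"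
      by (intro integrable_add integrable_on_divide int)
    show "norm (u x * v x) \<le> \<bar>u x\<bar> powr p / p + \<bar>v x\<bar> powr q / q" if "x \<in> S" for x
      using Youngs_inequality[OF pq, of "\<bar>u x\<bar>" "\<bar>v x\<bar>"] by (simp add: abs_mult)
  qed
  then have abs_int: "(\<lambda>x. \<bar>u x\<bar> * \<bar>v x\<bar>) integrable_on S"
    by (simp add: absolutely_integrable_on_def abs_mult)
  have "\<bar>integral S (\<lambda>x. u x * v x)\<bar> \<le> integral S (\<lambda>x. \<bar>u x\<bar> * \<bar>v x\<bar>)"
    using integral_norm_bound_integral[OF int(1) abs_int] by (simp add: abs_mult)
  also have "\<dots> \<le> integral S (\<lambda>x. \<bar>u x\<bar> powr p) powr (1/p) * integral S (\<lambda>x. \<bar>v x\<bar> powr q) powr (1/q)"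
    by (rule integral_mult_le_Holder[OF pq _ _ abs_int int(2,3)]) auto
  finally show ?thesis .
qed

lemma s_concave_on_subset: "s_concave_on s A g \<Longrightarrow> B \<subseteq> A \<Longrightarrow> s_concave_on s B g"
  unfolding s_concave_on_def by blast

lemma s_concave_on_midpoint_ge:
  assumes conc: "s_concave_on s {x..y} g" and u: "u \<in> {x..y}"
  shows "(1/2) powr s * (g u + g (x + y - u)) \<le> g ((x + y) / 2)"
proof -
  have "x + y - u \<in> {x..y}" "(1/2::real) \<in> {0..1}" using u by auto
  then have "(1/2) powr s * g u + (1 - 1/2) powr s * g (x + y - u)
      \<le> g ((1/2) * u + (1 - 1/2) * (x + y - u))"
    using conc u unfolding s_concave_on_def by blast
  also have "(1/2) * u + (1 - 1/2) * (x + y - u) = (x + y) / 2" by (simp add: field_simps)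
  finally show ?thesis by (simp add: distrib_left)
qed

lemma s_concave_on_le_midpoint:
  assumes conc: "s_concave_on s {x..y} g" and u: "u \<in> {x..y}"
  shows "g u \<le> 2 powr s * g ((x + y) / 2)"
proof -
  have "g (x + y - u) \<ge> 0" using conc u unfolding s_concave_on_def by auto
  then have "(1/2) powr s * g u \<le> (1/2) powr s * (g u + g (x + y - u))"
    by (intro mult_left_mono) auto
  also note s_concave_on_midpoint_ge[OF conc u]
  finally have "(1/2) powr s * g u \<le> g ((x + y) / 2)" .
  then show ?thesis by (simp add: powr_divide field_simps)
qed

lemma has_integral_reflect_interval:
  fixes g :: "real \<Rightarrow> real"
  assumes "x \<le> y" "g integrable_on {x..y}"
  shows "((\<lambda>z. g (x + y - z)) has_integral integral {x..y} g) {x..y}"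
proof -
  have "((\<lambda>z. g ((-1) *\<^sub>R z + (x + y))) has_integral (1 / \<bar>-1\<bar> ^ DIM(real)) *\<^sub>R integral {x..y} g)
     ((\<lambda>z. (1 / -1) *\<^sub>R z + - ((1 / -1) *\<^sub>R (x + y))) ` cbox x y)"
    by (rule has_integral_affinity) (use assms in auto)
  moreover have "(\<lambda>z. (1 / -1) *\<^sub>R z + - ((1 / -1) *\<^sub>R (x + y))) ` cbox x y = {x..y}"
  proof -
    have "w \<in> (\<lambda>z. (1 / -1) *\<^sub>R z + - ((1 / -1) *\<^sub>R (x + y))) ` cbox x y" if "w \<in> {x..y}" for w
      using that by (intro image_eqI[of _ _ "x + y - w"]) auto
    then show ?thesis by auto
  qed
  ultimately show ?thesis by (simp add: algebra_simps)
qed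

lemma s_concave_on_integral_le:
  fixes g :: "real \<Rightarrow> real"
  assumes conc: "s_concave_on s {x..y} g" and "x \<le> y" and int: "g integrable_on {x..y}"
  shows "integral {x..y} g \<le> (y - x) * 2 powr (s - 1) * g ((x + y) / 2)"
proof -
  have midpoint_bound:
    "(1/2) powr s * (integral {x..y} g + integral {x..y} g) \<le> (y - x) * g ((x + y) / 2)"
  proof (rule has_integral_le[OF _ _ s_concave_on_midpoint_ge[OF conc]])
    show "((\<lambda>z. (1/2) powr s * (g z + g (x + y - z))) has_integral
        (1/2) powr s * (integral {x..y} g + integral {x..y} g)) {x..y}"
      by (intro has_integral_mult_right has_integral_add integrable_integral int
          has_integral_reflect_interval \<open>x \<le> y\<close>)
    show "((\<lambda>z. g ((x + y) / 2)) has_integral (y - x) * g ((x + y) / 2)) {x..y}"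
      using has_integral_const_real[of "g ((x + y) / 2)" x y] \<open>x \<le> y\<close> by (simp add: mult.commute)
  qed
  have "2 powr (s - 1) * (2 * (1/2) powr s) = (1::real)"
    by (simp add: powr_divide powr_diff)
  then have "integral {x..y} g = (2 powr (s - 1) * (2 * (1/2) powr s)) * integral {x..y} g"
    by simp
  also have "\<dots> = 2 powr (s - 1) * ((1/2) powr s * (integral {x..y} g + integral {x..y} g))"
    by (simp add: algebra_simps)
  also have "\<dots> \<le> 2 powr (s - 1) * ((y - x) * g ((x + y) / 2))"
    using midpoint_bound by (rule mult_left_mono) simp
  finally show ?thesis by (simp add: algebra_simps)
qed

lemma has_integral_linear_weight_derivative:
  fixes f f' :: "real \<Rightarrow> real"
  assumes deriv: "\<And>x. x \<in> {x0..x1} \<Longrightarrow> (f has_real_derivative f' x) (at x)" and "x0 \<le> x1"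
  shows "((\<lambda>x. (x - k) * f' x) has_integral
           (x1 - k) * f x1 - (x0 - k) * f x0 - integral {x0..x1} f) {x0..x1}"
proof -
  have ftc: "((\<lambda>x. f x + (x - k) * f' x) has_integral (x1 - k) * f x1 - (x0 - k) * f x0) {x0..x1}"
  proof (rule fundamental_theorem_of_calculus[OF \<open>x0 \<le> x1\<close>])
    fix x assume "x \<in> {x0..x1}"
    then have "((\<lambda>x. (x - k) * f x) has_real_derivative f x + (x - k) * f' x) (at x)"
      using deriv by (auto intro!: derivative_eq_intros)
    then show "((\<lambda>x. (x - k) * f x) has_vector_derivative f x + (x - k) * f' x) (at x within {x0..x1})"
      by (simp add: has_real_derivative_iff_has_vector_derivative has_vector_derivative_at_within)
  qed
  have "f integrable_on {x0..x1}"
    using deriv by (intro integrable_continuous_interval)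
      (meson DERIV_isCont continuous_at_imp_continuous_on)
  from has_integral_diff[OF ftc integrable_integral[OF this]] show ?thesis by simp
qed

lemma derivative_abs_powr_integrable_on:
  fixes f f' :: "real \<Rightarrow> real"
  assumes deriv: "\<And>x. x \<in> {a..b} \<Longrightarrow> (f has_real_derivative f' x) (at x)" and "a \<le> b"
    and bounded: "\<And>x. x \<in> {a..b} \<Longrightarrow> \<bar>f' x\<bar> powr q \<le> C"
  shows "(\<lambda>x. \<bar>f' x\<bar> powr q) integrable_on {a..b}"
proof (rule measurable_bounded_by_integrable_imp_integrable_real)
  have "(f' has_integral (f b - f a)) {a..b}"
    using deriv \<open>a \<le> b\<close>
    by (intro fundamental_theorem_of_calculus)
       (auto simp flip: has_real_derivative_iff_has_vector_derivative
             intro: has_field_derivative_at_within)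
  then show "(\<lambda>x. \<bar>f' x\<bar> powr q) \<in> borel_measurable (lebesgue_on {a..b})"
    by (intro measurable_abs_powr integrable_imp_measurable) blast
  show "(\<lambda>x. C) integrable_on {a..b}" by (rule integrable_const_ivl)
qed (use bounded in auto)

lemma kernel_piece_bound:
  fixes f f' :: "real \<Rightarrow> real"
  assumes deriv: "\<And>x. x \<in> {x0..x1} \<Longrightarrow> (f has_real_derivative f' x) (at x)" and "x0 \<le> x1"
    and conc: "s_concave_on s {x0..x1} (\<lambda>x. \<bar>f' x\<bar> powr q)"
    and pq: "p > 1" "q > 1" "1/p + 1/q = 1"
  shows "\<bar>(x1 - k) * f x1 - (x0 - k) * f x0 - integral {x0..x1} f\<bar>
    \<le> integral {x0..x1} (\<lambda>x. \<bar>x - k\<bar> powr p) powr (1/p) *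
       ((x1 - x0) * 2 powr (s - 1) * \<bar>f' ((x0 + x1) / 2)\<bar> powr q) powr (1/q)"
proof -
  have ibp: "((\<lambda>x. (x - k) * f' x) has_integral
      (x1 - k) * f x1 - (x0 - k) * f x0 - integral {x0..x1} f) {x0..x1}"
    by (rule has_integral_linear_weight_derivative[OF deriv \<open>x0 \<le> x1\<close>])
  have int: "(\<lambda>x. \<bar>f' x\<bar> powr q) integrable_on {x0..x1}"
    using s_concave_on_le_midpoint[OF conc]
    by (intro derivative_abs_powr_integrable_on[OF deriv \<open>x0 \<le> x1\<close>])
  have "(\<lambda>x. \<bar>x - k\<bar> powr p) integrable_on {x0..x1}"
    using pq by (intro integrable_continuous_interval) (auto intro!: continuous_intros continuous_on_powr')
  then have "\<bar>integral {x0..x1} (\<lambda>x. (x - k) * f' x)\<bar>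
      \<le> integral {x0..x1} (\<lambda>x. \<bar>x - k\<bar> powr p) powr (1/p) *
         integral {x0..x1} (\<lambda>x. \<bar>f' x\<bar> powr q) powr (1/q)"
    using ibp int by (intro abs_integral_mult_le_Holder[OF pq]) auto
  also have "\<dots> \<le> integral {x0..x1} (\<lambda>x. \<bar>x - k\<bar> powr p) powr (1/p) *
       ((x1 - x0) * 2 powr (s - 1) * \<bar>f' ((x0 + x1) / 2)\<bar> powr q) powr (1/q)"
    using s_concave_on_integral_le[OF conc \<open>x0 \<le> x1\<close> int] integral_nonneg[OF int] pq
    by (intro mult_left_mono powr_mono2) auto
  finally show ?thesis using ibp by (simp add: integral_unique)
qed

lemma I_f_kernel_decomposition:
  fixes f :: "real \<Rightarrow> real" and a b \<alpha> lam :: real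
  assumes "f integrable_on {a..b}" "0 \<le> \<alpha>" "\<alpha> \<le> 1" "a < b"
  defines "m \<equiv> \<alpha> * a + (1 - \<alpha>) * b"
    and "k1 \<equiv> a + \<alpha> * lam * (b - a)" and "k2 \<equiv> a + (1 - lam * (1 - \<alpha>)) * (b - a)"
  shows "(b - a) * I_f f lam \<alpha> a b
    = ((m - k1) * f m - (a - k1) * f a - integral {a..m} f)
      + ((b - k2) * f b - (m - k2) * f m - integral {m..b} f)"
proof -
  have "a \<le> m" "m \<le> b"
    using assms mult_left_mono[of a b \<alpha>] mult_left_mono[of a b "1 - \<alpha>"]
    unfolding m_def by (auto simp: algebra_simps)
  then have "integral {a..b} f = integral {a..m} f + integral {m..b} f"
    using assms(1) by (simp add: Henstock_Kurzweil_Integration.integral_combine)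
  then show ?thesis
    using \<open>a < b\<close> unfolding I_f_def m_def k1_def k2_def by (simp add: field_simps)
qed

lemma conjugate_kernel_bound_scale:
  fixes d e c E p q :: real
  assumes "d > 0" "e \<ge> 0" "c \<ge> 0" "E \<ge> 0" and pq: "p > 0" "q > 0" "1/p + 1/q = 1"
  shows "(d powr (p + 1) * e / (p + 1)) powr (1/p) * (d * c * E) powr (1/q) / d
       = d * c powr (1/q) * (1 / (p + 1)) powr (1/p) * (e powr (1/p) * E powr (1/q))"
proof -
  have "(p + 1) * (1/p) + 1/q = 2" using pq by (simp add: field_simps)
  then have "(d powr (p + 1)) powr (1/p) * d powr (1/q) = d powr 2"
    by (simp only: powr_powr powr_add[symmetric])
  also have "\<dots> = d * d" using \<open>d > 0\<close> by (simp add: powr_numeral power2_eq_square)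
  finally have d_power: "(d powr (p + 1)) powr (1/p) * d powr (1/q) / d = d" using \<open>d > 0\<close> by simp
  have "(d powr (p + 1) * e / (p + 1)) powr (1/p) * (d * c * E) powr (1/q)
      = ((d powr (p + 1)) powr (1/p) * d powr (1/q)) * c powr (1/q) * (1 / (p + 1)) powr (1/p)
        * (e powr (1/p) * E powr (1/q))"
    using assms by (simp add: powr_mult powr_divide ac_simps)
  then show ?thesis using d_power \<open>d > 0\<close> by (simp add: field_simps)
qed

lemma I_f_abs_le_kernel_integrals:
  fixes f f' :: "real \<Rightarrow> real" and a b \<alpha> lam s q p :: real
  assumes deriv: "\<And>x. x \<in> {a..b} \<Longrightarrow> (f has_real_derivative f' x) (at x)" and "a < b"
    and \<alpha>: "0 \<le> \<alpha>" "\<alpha> \<le> 1"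
    and conc: "s_concave_on s {a..b} (\<lambda>x. \<bar>f' x\<bar> powr q)"
    and pq: "p > 1" "q > 1" "1/p + 1/q = 1"
  defines "m \<equiv> \<alpha> * a + (1 - \<alpha>) * b"
    and "k1 \<equiv> a + \<alpha> * lam * (b - a)" and "k2 \<equiv> a + (1 - lam * (1 - \<alpha>)) * (b - a)"
  shows "\<bar>I_f f lam \<alpha> a b\<bar>
    \<le> (integral {a..m} (\<lambda>x. \<bar>x - k1\<bar> powr p) powr (1/p) *
          ((m - a) * 2 powr (s - 1) * \<bar>f' ((a + m) / 2)\<bar> powr q) powr (1/q)
        + integral {m..b} (\<lambda>x. \<bar>x - k2\<bar> powr p) powr (1/p) *
          ((b - m) * 2 powr (s - 1) * \<bar>f' ((m + b) / 2)\<bar> powr q) powr (1/q)) / (b - a)"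
proof -
  have "a \<le> m" "m \<le> b"
    using \<alpha> \<open>a < b\<close> mult_left_mono[of a b \<alpha>] mult_left_mono[of a b "1 - \<alpha>"]
    unfolding m_def by (auto simp: algebra_simps)
  have conc_sub: "s_concave_on s {x..y} (\<lambda>x. \<bar>f' x\<bar> powr q)"
    and deriv_sub: "\<And>z. z \<in> {x..y} \<Longrightarrow> (f has_real_derivative f' z) (at z)"
    if "a \<le> x" "y \<le> b" for x y
    using s_concave_on_subset[OF conc] deriv that by auto
  have "f integrable_on {a..b}"
    using deriv by (intro integrable_continuous_interval)
      (meson DERIV_isCont continuous_at_imp_continuous_on)
  then have "(b - a) * I_f f lam \<alpha> a b
      = ((m - k1) * f m - (a - k1) * f a - integral {a..m} f)
        + ((b - k2) * f b - (m - k2) * f m - integral {m..b} f)"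
    unfolding m_def k1_def k2_def by (rule I_f_kernel_decomposition[OF _ \<alpha> \<open>a < b\<close>])
  then have "\<bar>(b - a) * I_f f lam \<alpha> a b\<bar>
      \<le> \<bar>(m - k1) * f m - (a - k1) * f a - integral {a..m} f\<bar>
        + \<bar>(b - k2) * f b - (m - k2) * f m - integral {m..b} f\<bar>"
    by (simp only: abs_triangle_ineq)
  also have "\<dots> \<le> integral {a..m} (\<lambda>x. \<bar>x - k1\<bar> powr p) powr (1/p) *
          ((m - a) * 2 powr (s - 1) * \<bar>f' ((a + m) / 2)\<bar> powr q) powr (1/q)
        + integral {m..b} (\<lambda>x. \<bar>x - k2\<bar> powr p) powr (1/p) *
          ((b - m) * 2 powr (s - 1) * \<bar>f' ((m + b) / 2)\<bar> powr q) powr (1/q)"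
    using \<open>a \<le> m\<close> \<open>m \<le> b\<close>
    by (intro add_mono kernel_piece_bound pq conc_sub deriv_sub) auto
  finally show ?thesis using \<open>a < b\<close> by (simp add: abs_mult pos_le_divide_eq mult.commute)
qed

lemma I_f_abs_le_kernel:
  fixes f f' :: "real \<Rightarrow> real" and a b \<alpha> lam s q p e1 e2 :: real
  assumes deriv: "\<And>x. x \<in> {a..b} \<Longrightarrow> (f has_real_derivative f' x) (at x)" and "a < b"
    and \<alpha>: "0 \<le> \<alpha>" "\<alpha> \<le> 1"
    and conc: "s_concave_on s {a..b} (\<lambda>x. \<bar>f' x\<bar> powr q)"
    and pq: "p > 1" "q > 1" "1/p + 1/q = 1"
    and kernel1: "integral {a..\<alpha> * a + (1 - \<alpha>) * b} (\<lambda>x. \<bar>x - (a + \<alpha> * lam * (b - a))\<bar> powr p)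
      = (b - a) powr (p + 1) * e1 / (p + 1)"
    and kernel2: "integral {\<alpha> * a + (1 - \<alpha>) * b..b} (\<lambda>x. \<bar>x - (a + (1 - lam * (1 - \<alpha>)) * (b - a))\<bar> powr p)
      = (b - a) powr (p + 1) * e2 / (p + 1)"
  shows "\<bar>I_f f lam \<alpha> a b\<bar> \<le> (b - a) * 2 powr ((s - 1) / q) * (1 / (p + 1)) powr (1 / p) *
    (e1 powr (1 / p) * E_f f' a b \<alpha> q powr (1 / q) + e2 powr (1 / p) * F_f f' a b \<alpha> q powr (1 / q))"
proof -
  have e_nonneg: "e \<ge> 0"
    if "integral {x..y} (\<lambda>x. \<bar>x - k\<bar> powr p) = (b - a) powr (p + 1) * e / (p + 1)" for x y k e
  proof -
    have "integral {x..y} (\<lambda>x. \<bar>x - k\<bar> powr p) \<ge> 0"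
      using pq by (intro integral_nonneg integrable_continuous_interval)
        (auto intro!: continuous_intros continuous_on_powr')
    then show ?thesis using that \<open>a < b\<close> pq by (simp add: zero_le_divide_iff zero_le_mult_iff)
  qed
  have E: "(\<alpha> * a + (1 - \<alpha>) * b - a) * 2 powr (s - 1) * \<bar>f' ((a + (\<alpha> * a + (1 - \<alpha>) * b)) / 2)\<bar> powr q
      = (b - a) * 2 powr (s - 1) * E_f f' a b \<alpha> q"
    unfolding E_f_def by (simp add: algebra_simps)
  have F: "(b - (\<alpha> * a + (1 - \<alpha>) * b)) * 2 powr (s - 1) * \<bar>f' ((\<alpha> * a + (1 - \<alpha>) * b + b) / 2)\<bar> powr q
      = (b - a) * 2 powr (s - 1) * F_f f' a b \<alpha> q"
    unfolding F_f_def by (simp add: algebra_simps)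
  have "\<bar>I_f f lam \<alpha> a b\<bar>
    \<le> (((b - a) powr (p + 1) * e1 / (p + 1)) powr (1/p) * ((b - a) * 2 powr (s - 1) * E_f f' a b \<alpha> q) powr (1/q)
      + ((b - a) powr (p + 1) * e2 / (p + 1)) powr (1/p) * ((b - a) * 2 powr (s - 1) * F_f f' a b \<alpha> q) powr (1/q))
      / (b - a)"
    using I_f_abs_le_kernel_integrals[OF deriv \<open>a < b\<close> \<alpha> conc pq, of lam]
    unfolding kernel1 kernel2 E F by blast
  also have "\<dots> = (b - a) * 2 powr ((s - 1) / q) * (1 / (p + 1)) powr (1 / p) *
    (e1 powr (1 / p) * E_f f' a b \<alpha> q powr (1 / q) + e2 powr (1 / p) * F_f f' a b \<alpha> q powr (1 / q))"
    using \<open>a < b\<close> pq e_nonneg[OF kernel1] e_nonneg[OF kernel2] \<alpha>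
    by (simp add: add_divide_distrib conjugate_kernel_bound_scale E_f_def F_f_def powr_powr distrib_left)
  finally show ?thesis .
qed

theorem theorem2p5:
  fixes f f' :: "real \<Rightarrow> real" and I :: "real set"
    and a b \<alpha> lam s q p :: real
  assumes I: "is_interval I"
    and deriv: "\<forall>x\<in>interior I. (f has_real_derivative f' x) (at x)"
    and ab: "a \<in> interior I" "b \<in> interior I" "a < b"
    and L: "set_integrable lborel {a..b} f'"
    and alpha: "\<alpha> \<in> {0..1}" and lam: "lam \<in> {0..1}"
    and s: "s \<in> {0<..1}" and q: "q > 1"
    and conc: "s_concave_on s {a..b} (\<lambda>x. \<bar>f' x\<bar> powr q)"
    and p: "1 / p + 1 / q = 1"
  shows
   "(\<alpha> * lam \<le> 1 - \<alpha> \<and> 1 - \<alpha> \<le> 1 - lam * (1 - \<alpha>) \<longrightarrow>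
      \<bar>I_f f lam \<alpha> a b\<bar> \<le> (b - a) * 2 powr ((s - 1) / q) * (1 / (p + 1)) powr (1 / p) *
        (eps1 \<alpha> lam p powr (1 / p) * E_f f' a b \<alpha> q powr (1 / q)
         + eps1 (1 - \<alpha>) lam p powr (1 / p) * F_f f' a b \<alpha> q powr (1 / q))) \<and>
    (\<alpha> * lam \<le> 1 - lam * (1 - \<alpha>) \<and> 1 - lam * (1 - \<alpha>) \<le> 1 - \<alpha> \<longrightarrow>
      \<bar>I_f f lam \<alpha> a b\<bar> \<le> (b - a) * 2 powr ((s - 1) / q) * (1 / (p + 1)) powr (1 / p) *
        (eps1 \<alpha> lam p powr (1 / p) * E_f f' a b \<alpha> q powr (1 / q)
         + eps2 (1 - \<alpha>) lam p powr (1 / p) * F_f f' a b \<alpha> q powr (1 / q))) \<and>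
    (1 - \<alpha> \<le> \<alpha> * lam \<and> \<alpha> * lam \<le> 1 - lam * (1 - \<alpha>) \<longrightarrow>
      \<bar>I_f f lam \<alpha> a b\<bar> \<le> (b - a) * 2 powr ((s - 1) / q) * (1 / (p + 1)) powr (1 / p) *
        (eps2 \<alpha> lam p powr (1 / p) * E_f f' a b \<alpha> q powr (1 / q)
         + eps1 (1 - \<alpha>) lam p powr (1 / p) * F_f f' a b \<alpha> q powr (1 / q)))"
proof -
  have "1/p = 1 - 1/q" using p by simp
  moreover have "0 < 1 - 1/q" "1 - 1/q < 1" using q by (auto simp: field_simps)
  ultimately have "p > 1" by (smt (verit) divide_less_eq_1 zero_less_divide_1_iff)
  then have pq: "p > 1" "q > 1" "1/p + 1/q = 1" using q p by auto
  have "{a..b} \<subseteq> interior I"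
    using I ab by (meson atLeastAtMost_iff convex_interior is_interval_convex
        is_interval_convex_1 mem_is_interval_1_I subsetI)
  then have deriv_ab: "\<And>x. x \<in> {a..b} \<Longrightarrow> (f has_real_derivative f' x) (at x)"
    using deriv by blast
  note kernel_bound = I_f_abs_le_kernel[OF deriv_ab \<open>a < b\<close> _ _ conc pq]
  show ?thesis
    using alpha lam \<open>a < b\<close> \<open>p > 1\<close>
    by (auto intro!: kernel_bound integral_left_kernel_eps1 integral_left_kernel_eps2
        integral_right_kernel_eps1 integral_right_kernel_eps2)
qed

end
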